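(* Let $p\geqslant 3$ be a prime and let $g\geqslant 2$ be an integer. (1) Neither the dihedral group $\mathbb{D}_{p^2}$ of order $2p^2$ nor the group $\mathbb{Z}_p^2\rtimes\mathbb{Z}_2=\langle a,b,c\mid a^p=b^p=c^2=1,\ cac=a^{-1},\ cbc=b^{-1},\ [a,b]=1\rangle$ acts triangularly on a compact Riemann surface of genus $g$. (2) If $\mathbb{Z}_{2p}\times\mathbb{Z}_p$ acts triangularly on a compact Riemann surface of genus $g$, then the signature of the action is $(2p,2p,p)$. (3) If $\mathbb{D}_p\times\mathbb{Z}_p$ acts triangularly on a compact Riemann surface of genus $g$, then the signature of the action is $(2p,2p,p)$ or $(2,p,2p)$. (4) If the cyclic group $\mathbb{Z}_{2p^2}$ acts triangularly on a compact Riemann surface of genus $g$, then the signature of the action is one of $(2,p^2,2p^2)$, $(2p^2,2p^2,p)$, $(2p^2,2p^2,p^2)$, $(2p,p^2,2p^2)$.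
   Context: All groups act faithfully by conformal automorphisms on compact Riemann surfaces. $\mathbb{Z}_n$ denotes the cyclic group of order $n$ and $\mathbb{D}_n$ the dihedral group of order $2n$. A finite group $G$ acting on a compact Riemann surface $S$ acts with signature $(h;m_1,\dots,m_r)$ if $S/G$ has genus $h$ and the branched regular covering $S\to S/G$ ramifies over exactly $r$ points, the points in the fibre over the $i$-th of which have $G$-stabiliser of order $m_i\ge 2$. The action is called triangular if $h=0$ and $r=3$; the signature is then written $(m_1,m_2,m_3)$ (up to the order of the $m_i$). Equivalently, $G$ acts with signature $(m_1,m_2,m_3)$ iff there is a surface-kernel epimorphism (ske) $\Phi:\Gamma\to G$, i.e. an epimorphism injective on each finite cyclic subgroup, from the triangle group $\Gamma=\langle x_1,x_2,x_3\mid x_1x_2x_3=x_1^{m_1}=x_2^{m_2}=x_3^{m_3}=1\rangle$, with $S\cong\mathbb{H}/\ker\Phi$. *)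

theory Defs
  imports "HOL-Algebra.Algebra" "HOL-Library.Multiset"
begin

text \<open>Triangular action of a finite group G on a compact Riemann surface of genus g
 with signature M = {#m1,m2,m3#}: equivalently (surface-kernel epimorphism from the
 triangle group (m1,m2,m3)) a generating triple x1,x2,x3 of G with x1 x2 x3 = 1 and
 ord xi = mi >= 2, the genus being given by the Riemann--Hurwitz formula
 2g - 2 = |G| (1 - 1/m1 - 1/m2 - 1/m3).\<close>

definition acts_triangularly :: "('a, 'b) monoid_scheme \<Rightarrow> nat \<Rightarrow> nat multiset \<Rightarrow> bool" where
  "acts_triangularly G g M \<longleftrightarrow> group G \<and> finite (carrier G) \<and>
     (\<exists>x1 x2 x3 m1 m2 m3.
        x1 \<in> carrier G \<and> x2 \<in> carrier G \<and> x3 \<in> carrier G \<and>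
        generate G {x1, x2, x3} = carrier G \<and>
        x1 \<otimes>\<^bsub>G\<^esub> x2 \<otimes>\<^bsub>G\<^esub> x3 = \<one>\<^bsub>G\<^esub> \<and>
        group.ord G x1 = m1 \<and> group.ord G x2 = m2 \<and> group.ord G x3 = m3 \<and>
        m1 \<ge> 2 \<and> m2 \<ge> 2 \<and> m3 \<ge> 2 \<and>
        M = {#m1, m2, m3#} \<and>
        2 * real g - 2 = real (order G) * (1 - 1 / real m1 - 1 / real m2 - 1 / real m3))"

text \<open>Dihedral group D_n of order 2n: pairs (k, s) standing for r^k t^s,
 with t r t = r^-1.\<close>
definition dihedral_group :: "nat \<Rightarrow> (int \<times> int) monoid" where
  "dihedral_group n = \<lparr>carrier = {0..<int n} \<times> {0..<2},
     monoid.mult = (\<lambda>(a, s) (b, t). ((a + (if s = 0 then b else - b)) mod int n, (s + t) mod 2)),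
     one = (0, 0)\<rparr>"

text \<open>Z_p^2 \<rtimes> Z_2 = <a,b,c | a^p=b^p=c^2=1, cac=a^-1, cbc=b^-1, [a,b]=1>:
 ((i, j), s) stands for a^i b^j c^s.\<close>
definition Zp2_semidir_Z2 :: "nat \<Rightarrow> ((int \<times> int) \<times> int) monoid" where
  "Zp2_semidir_Z2 p = \<lparr>carrier = ({0..<int p} \<times> {0..<int p}) \<times> {0..<2},
     monoid.mult = (\<lambda>((a1, a2), s) ((b1, b2), t).
        (((a1 + (if s = 0 then b1 else - b1)) mod int p,
          (a2 + (if s = 0 then b2 else - b2)) mod int p), (s + t) mod 2)),
     one = ((0, 0), 0)\<rparr>"

end

theory Submission
  imports Defs
begin

(* A triangular action of G is given by a generating triple x1, x2, x3 with x1 x2 x3 = 1, and its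
   signature is the multiset of the orders of the xi; Riemann-Hurwitz with g >= 2 only excludes the
   signatures (2, 2, m).  Each group considered has a homomorphism h onto Z_2.  Since
   h x1 + h x2 + h x3 = 0 and h does not vanish on all generators, after a cyclic rotation
   h x1 = h x2 = 1 and h x3 = 0, and the orders are read off from the structure of the kernel of h
   and of its complement.
   In D_(p^2) and in the semidirect product of Z_p^2 by Z_2 every element outside the kernel is an
   involution, which forces a signature (2, 2, m).  In D_p x Z_p and Z_2p x Z_p the kernel has
   exponent p, so the orders are 2 or 2p, 2 or 2p, and p.  In Z_2p x Z_p an involution among x1, x2
   would make the image of G in Z_p x Z_p cyclic, which the determinant homomorphism
   w |-> det (x3, w) mod p rules out.  In Z_(2p^2) the reduction mod p shows that at most one xi is
   divisible by p, and the order of xi is determined by its parity and by whether p divides it. *)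

definition generating_triple :: "('a, 'b) monoid_scheme \<Rightarrow> 'a \<Rightarrow> 'a \<Rightarrow> 'a \<Rightarrow> bool" where
  "generating_triple G x1 x2 x3 \<longleftrightarrow>
     x1 \<in> carrier G \<and> x2 \<in> carrier G \<and> x3 \<in> carrier G \<and>
     generate G {x1, x2, x3} = carrier G \<and> x1 \<otimes>\<^bsub>G\<^esub> x2 \<otimes>\<^bsub>G\<^esub> x3 = \<one>\<^bsub>G\<^esub>"

lemma acts_triangularlyE:
  assumes "acts_triangularly G g M"
  obtains x1 x2 x3 where "group G" "generating_triple G x1 x2 x3"
    "M = {#group.ord G x1, group.ord G x2, group.ord G x3#}"
    "2 \<le> group.ord G x1" "2 \<le> group.ord G x2" "2 \<le> group.ord G x3"
  using assms unfolding acts_triangularly_def generating_triple_def by blast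

lemma acts_triangularly_two_two_imp_genus_le_1:
  assumes "acts_triangularly G g {#2, 2, m#}"
  shows "g \<le> 1"
proof -
  obtain m1 m2 m3 where ms: "{#m1, m2, m3#} = {#2, 2, m#}" "m1 \<ge> 2" "m2 \<ge> 2" "m3 \<ge> 2"
    and rh: "2 * real g - 2 = real (order G) * (1 - 1 / real m1 - 1 / real m2 - 1 / real m3)"
    using assms unfolding acts_triangularly_def by metis
  have "1 / real m1 + 1 / real m2 + 1 / real m3 = 1 / 2 + 1 / 2 + 1 / real m"
    using arg_cong[OF ms(1), of "\<lambda>M. \<Sum>k\<in>#M. 1 / real k"] by simp
  then have "2 * real g - 2 = - real (order G) / real m"
    using rh by (simp add: field_simps)
  also have "\<dots> \<le> 0"
    by simp
  finally show ?thesis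
    by simp
qed

lemma (in group) generating_triple_rotate:
  assumes "generating_triple G x1 x2 x3"
  shows "generating_triple G x2 x3 x1"
proof -
  have "x1 \<otimes> (x2 \<otimes> x3) = \<one>" "x1 \<in> carrier G" "x2 \<otimes> x3 \<in> carrier G"
    using assms by (auto simp: generating_triple_def m_assoc)
  then have "x2 \<otimes> x3 \<otimes> x1 = \<one>"
    by (rule inv_comm)
  with assms show ?thesis
    by (auto simp: generating_triple_def insert_commute)
qed

lemma (in group_hom) hom_one_on_generate:
  assumes "S \<subseteq> carrier G" "\<And>s. s \<in> S \<Longrightarrow> h s = \<one>\<^bsub>H\<^esub>" "x \<in> generate G S"
  shows "h x = \<one>\<^bsub>H\<^esub>"
proof -
  have "generate G S \<subseteq> kernel G H h"
    using assms(1,2) by (intro G.generate_subgroup_incl subgroup_kernel) (auto simp: kernel_def)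
  with assms(3) show ?thesis
    by (auto simp: kernel_def)
qed

lemma hom_integer_mod_group_generating_triple_sum:
  assumes "group G" "h \<in> hom G (integer_mod_group n)" "generating_triple G x1 x2 x3"
  shows "(h x1 + h x2 + h x3) mod int n = 0"
proof -
  interpret group_hom G "integer_mod_group n" h
    using assms(1,2) by (simp add: group_hom_def group_hom_axioms_def)
  have "x1 \<in> carrier G" "x2 \<in> carrier G" "x3 \<in> carrier G"
    and "h (x1 \<otimes>\<^bsub>G\<^esub> x2 \<otimes>\<^bsub>G\<^esub> x3) = 0"
    using assms(3) by (simp_all add: generating_triple_def)
  then show ?thesis
    by (simp add: mod_simps)
qed

lemma hom_integer_mod_group_generating_triple_trivial:
  assumes G: "group G" and h: "h \<in> hom G (integer_mod_group n)"
    and x: "generating_triple G x1 x2 x3" and h12: "h x1 = 0" "h x2 = 0"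
    and y: "y \<in> carrier G"
  shows "h y = 0"
proof -
  interpret group_hom G "integer_mod_group n" h
    using G h by (simp add: group_hom_def group_hom_axioms_def)
  have xs: "x1 \<in> carrier G" "x2 \<in> carrier G" "x3 \<in> carrier G"
    and gen: "generate G {x1, x2, x3} = carrier G"
    using x by (simp_all add: generating_triple_def)
  have "h x3 mod int n = h x3"
    using hom_closed[OF xs(3)] by (cases "n = 0") (auto simp: carrier_integer_mod_group)
  then have "h x3 = 0"
    using hom_integer_mod_group_generating_triple_sum[OF G h x] h12 by simp
  with h12 xs gen y show ?thesis
    using hom_one_on_generate[of "{x1, x2, x3}" y] by auto
qed

lemma hom_integer_mod_group_ord:
  assumes "group G" "h \<in> hom G (integer_mod_group n)" "x \<in> carrier G"
  shows "int n dvd int (group.ord G x) * h x"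
proof -
  interpret group_hom G "integer_mod_group n" h
    using assms(1,2) by (simp add: group_hom_def group_hom_axioms_def)
  have "int (group.ord G x) * h x mod int n = h (x [^]\<^bsub>G\<^esub> group.ord G x)"
    by (simp only: hom_nat_pow[OF assms(3)] pow_integer_mod_group)
  also have "\<dots> = 0"
    using assms(3) by simp
  finally show ?thesis
    by (simp add: dvd_eq_mod_eq_0)
qed

lemma hom_integer_mod_group_mod:
  assumes "m dvd n"
  shows "(\<lambda>x. x mod int m) \<in> hom (integer_mod_group n) (integer_mod_group m)"
  using assms by (auto simp: hom_def carrier_integer_mod_group mod_mod_cancel mod_simps)

lemma generating_triple_parityE:
  assumes G: "group G" and h: "h \<in> hom G (integer_mod_group 2)" and w: "w \<in> carrier G" "h w = 1"
    and x: "generating_triple G x1 x2 x3"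
  obtains y1 y2 y3 where "generating_triple G y1 y2 y3" "{#y1, y2, y3#} = {#x1, x2, x3#}"
    "h y1 = 1" "h y2 = 1" "h y3 = 0"
proof -
  interpret group_hom G "integer_mod_group 2" h
    using G h by (simp add: group_hom_def group_hom_axioms_def)
  have xs: "x1 \<in> carrier G" "x2 \<in> carrier G" "x3 \<in> carrier G"
    using x by (simp_all add: generating_triple_def)
  have vals: "h x \<in> {0, 1}" if "x \<in> carrier G" for x
    using hom_closed[OF that] by (auto simp: carrier_integer_mod_group)
  have "\<not> (h x1 = 0 \<and> h x2 = 0)"
    using hom_integer_mod_group_generating_triple_trivial[OF G h x _ _ w(1)] w(2) by auto
  moreover have "(h x1 + h x2 + h x3) mod 2 = 0"
    using hom_integer_mod_group_generating_triple_sum[OF G h x] by simp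
  ultimately consider "h x1 = 1" "h x2 = 1" "h x3 = 0" | "h x2 = 1" "h x3 = 1" "h x1 = 0"
    | "h x3 = 1" "h x1 = 1" "h x2 = 0"
    using vals[OF xs(1)] vals[OF xs(2)] vals[OF xs(3)] by auto
  then show ?thesis
  proof cases
    case 1
    then show ?thesis
      using that[OF x] by simp
  next
    case 2
    then show ?thesis
      using that[OF group.generating_triple_rotate[OF G x]] by (simp add: add_mset_commute)
  next
    case 3
    then show ?thesis
      using that[OF group.generating_triple_rotate[OF G group.generating_triple_rotate[OF G x]]]
      by (simp add: add_mset_commute)
  qed
qed

lemma acts_triangularly_parityE:
  assumes act: "acts_triangularly G g M" and h: "h \<in> hom G (integer_mod_group 2)"
    and w: "w \<in> carrier G" "h w = 1"
  obtains x1 x2 x3 where "group G" "generating_triple G x1 x2 x3"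
    "M = {#group.ord G x1, group.ord G x2, group.ord G x3#}"
    "2 \<le> group.ord G x1" "2 \<le> group.ord G x2" "2 \<le> group.ord G x3"
    "h x1 = 1" "h x2 = 1" "h x3 = 0"
proof -
  obtain x1 x2 x3 where G: "group G" and x: "generating_triple G x1 x2 x3"
    and M: "M = {#group.ord G x1, group.ord G x2, group.ord G x3#}"
    and ord: "2 \<le> group.ord G x1" "2 \<le> group.ord G x2" "2 \<le> group.ord G x3"
    using acts_triangularlyE[OF act] by blast
  obtain y1 y2 y3 where y: "generating_triple G y1 y2 y3" "{#y1, y2, y3#} = {#x1, x2, x3#}"
    "h y1 = 1" "h y2 = 1" "h y3 = 0"
    using generating_triple_parityE[OF G h w x] by blast
  have "image_mset (group.ord G) {#y1, y2, y3#} = image_mset (group.ord G) {#x1, x2, x3#}"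
    by (simp only: y(2))
  then have "M = {#group.ord G y1, group.ord G y2, group.ord G y3#}"
    by (simp add: M)
  moreover have "2 \<le> group.ord G y" if "y \<in># {#x1, x2, x3#}" for y
    using that ord by auto
  ultimately show ?thesis
    using that[OF G y(1)] y(3-5) by (simp add: y(2)[symmetric])
qed

lemma (in group) ord_eq_2_if_square_eq_one:
  assumes "x \<in> carrier G" "x \<otimes> x = \<one>" "2 \<le> ord x"
  shows "ord x = 2"
proof -
  have "x [^] (2::nat) = \<one>"
    using assms(1,2) by (simp add: numeral_2_eq_2)
  then have "ord x dvd 2"
    using pow_eq_id[OF assms(1)] by simp
  with assms(3) show ?thesis
    using dvd_imp_le[of "ord x" 2] by simp
qed

lemma (in group) square_eq_one_if_ord_eq_2:
  "x \<in> carrier G \<Longrightarrow> ord x = 2 \<Longrightarrow> x \<otimes> x = \<one>"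
  using pow_ord_eq_1[of x] by (simp add: numeral_2_eq_2)

lemma not_acts_triangularly_if_odd_involutions:
  assumes h: "h \<in> hom G (integer_mod_group 2)" and w: "w \<in> carrier G" "h w = 1"
    and inv: "\<And>x. x \<in> carrier G \<Longrightarrow> h x = 1 \<Longrightarrow> x \<otimes>\<^bsub>G\<^esub> x = \<one>\<^bsub>G\<^esub>"
    and g: "2 \<le> g"
  shows "\<not> acts_triangularly G g M"
proof
  assume act: "acts_triangularly G g M"
  then obtain x1 x2 x3 where G: "group G" and x: "generating_triple G x1 x2 x3"
    and M: "M = {#group.ord G x1, group.ord G x2, group.ord G x3#}"
    and ord: "2 \<le> group.ord G x1" "2 \<le> group.ord G x2"
    and odd: "h x1 = 1" "h x2 = 1"
    using acts_triangularly_parityE[OF _ h w] by metis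
  have "x1 \<in> carrier G" "x2 \<in> carrier G"
    using x by (simp_all add: generating_triple_def)
  then have "group.ord G x1 = 2" "group.ord G x2 = 2"
    using group.ord_eq_2_if_square_eq_one[OF G] inv odd ord by simp_all
  then have "g \<le> 1"
    using acts_triangularly_two_two_imp_genus_le_1 act M by metis
  with g show False
    by simp
qed

lemma even_dvd_double_prime:
  fixes d p :: nat
  assumes "Factorial_Ring.prime p" "d dvd 2 * p" "even d"
  shows "d = 2 \<or> d = 2 * p"
proof -
  obtain e where e: "d = 2 * e"
    using assms(3) by blast
  then have "e dvd p"
    using assms(2) by simp
  then have "e = 1 \<or> e = p"
    using assms(1) prime_nat_iff by blast
  with e show ?thesis
    by auto
qed

lemma ord_cases_if_kernel_exponent_prime:
  assumes G: "group G" and h: "h \<in> hom G (integer_mod_group 2)" and p: "Factorial_Ring.prime p"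
    and exp: "\<And>y. y \<in> carrier G \<Longrightarrow> h y = 0 \<Longrightarrow> y [^]\<^bsub>G\<^esub> p = \<one>\<^bsub>G\<^esub>"
    and x: "x \<in> carrier G" "2 \<le> group.ord G x"
  shows "h x = 0 \<Longrightarrow> group.ord G x = p"
    and "h x = 1 \<Longrightarrow> group.ord G x = 2 \<or> group.ord G x = 2 * p"
proof -
  interpret group_hom G "integer_mod_group 2" h
    using G h by (simp add: group_hom_def group_hom_axioms_def)
  show "group.ord G x = p" if "h x = 0"
  proof -
    have "group.ord G x dvd p"
      using exp[OF x(1) that] G.pow_eq_id[OF x(1)] by simp
    with x(2) p show ?thesis
      using prime_nat_iff by force
  qed
  show "group.ord G x = 2 \<or> group.ord G x = 2 * p" if "h x = 1"
  proof -
    have "h (x \<otimes>\<^bsub>G\<^esub> x) = 0"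
      using x(1) that by simp
    then have "(x [^]\<^bsub>G\<^esub> (2::nat)) [^]\<^bsub>G\<^esub> p = \<one>\<^bsub>G\<^esub>"
      using exp x(1) by (simp add: numeral_2_eq_2)
    then have "group.ord G x dvd 2 * p"
      using G.pow_eq_id[OF x(1)] x(1) by (simp add: G.nat_pow_pow)
    moreover have "even (group.ord G x)"
      using hom_integer_mod_group_ord[OF G h x(1)] that by simp
    ultimately show ?thesis
      using even_dvd_double_prime[OF p] by blast
  qed
qed

lemma acts_triangularly_kernel_exponentE:
  assumes act: "acts_triangularly G g M" and g: "2 \<le> g"
    and h: "h \<in> hom G (integer_mod_group 2)" and w: "w \<in> carrier G" "h w = 1"
    and p: "Factorial_Ring.prime p"
    and exp: "\<And>y. y \<in> carrier G \<Longrightarrow> h y = 0 \<Longrightarrow> y [^]\<^bsub>G\<^esub> p = \<one>\<^bsub>G\<^esub>"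
  obtains x1 x2 x3 where "group G" "generating_triple G x1 x2 x3" "h x3 = 0"
    "M = {#group.ord G x1, group.ord G x2, group.ord G x3#}"
    "group.ord G x1 \<in> {2, 2 * p}" "group.ord G x2 \<in> {2, 2 * p}" "group.ord G x3 = p"
    "\<not> (group.ord G x1 = 2 \<and> group.ord G x2 = 2)"
proof -
  obtain x1 x2 x3 where G: "group G" and x: "generating_triple G x1 x2 x3"
    and M: "M = {#group.ord G x1, group.ord G x2, group.ord G x3#}"
    and ord: "2 \<le> group.ord G x1" "2 \<le> group.ord G x2" "2 \<le> group.ord G x3"
    and parity: "h x1 = 1" "h x2 = 1" "h x3 = 0"
    using acts_triangularly_parityE[OF act h w] by metis
  have xs: "x1 \<in> carrier G" "x2 \<in> carrier G" "x3 \<in> carrier G"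
    using x by (simp_all add: generating_triple_def)
  note ord_cases = ord_cases_if_kernel_exponent_prime[OF G h p]
  have "\<not> (group.ord G x1 = 2 \<and> group.ord G x2 = 2)"
    using acts_triangularly_two_two_imp_genus_le_1 act M g by fastforce
  then show ?thesis
    using that[OF G x parity(3) M] ord_cases(2)[OF exp xs(1) ord(1) parity(1)]
      ord_cases(2)[OF exp xs(2) ord(2) parity(2)] ord_cases(1)[OF exp xs(3) ord(3) parity(3)]
    by blast
qed

lemma dihedral_group_snd_hom: "snd \<in> hom (dihedral_group n) (integer_mod_group 2)"
  by (auto simp: hom_def dihedral_group_def carrier_integer_mod_group mod_simps)

lemma dihedral_group_reflection_square:
  "x \<in> carrier (dihedral_group n) \<Longrightarrow> snd x = 1 \<Longrightarrow>
    x \<otimes>\<^bsub>dihedral_group n\<^esub> x = \<one>\<^bsub>dihedral_group n\<^esub>"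
  by (auto simp: dihedral_group_def)

lemma dihedral_group_rotation_pow:
  "(k, 0) [^]\<^bsub>dihedral_group n\<^esub> (m::nat) = ((int m * k) mod int n, 0)"
  by (induction m) (simp_all add: dihedral_group_def mod_simps algebra_simps)

lemma dihedral_group_not_acts_triangularly:
  assumes "0 < n" "2 \<le> g"
  shows "\<not> acts_triangularly (dihedral_group n) g M"
  using assms
  by (intro not_acts_triangularly_if_odd_involutions[OF dihedral_group_snd_hom, of "(0, 1)"]
      dihedral_group_reflection_square) (auto simp: dihedral_group_def)

lemma Zp2_semidir_Z2_snd_hom: "snd \<in> hom (Zp2_semidir_Z2 n) (integer_mod_group 2)"
  by (auto simp: hom_def Zp2_semidir_Z2_def carrier_integer_mod_group mod_simps)

lemma Zp2_semidir_Z2_not_acts_triangularly: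
  assumes "0 < n" "2 \<le> g"
  shows "\<not> acts_triangularly (Zp2_semidir_Z2 n) g M"
  using assms
  by (intro not_acts_triangularly_if_odd_involutions[OF Zp2_semidir_Z2_snd_hom, of "((0, 0), 1)"])
    (auto simp: Zp2_semidir_Z2_def)

lemma pow_DirProd:
  "x [^]\<^bsub>G \<times>\<times> H\<^esub> (n::nat) = (fst x [^]\<^bsub>G\<^esub> n, snd x [^]\<^bsub>H\<^esub> n)"
  by (induction n) (simp_all add: mult_DirProd')

lemma dihedral_times_cyclic_signature:
  assumes p: "Factorial_Ring.prime p" and g: "2 \<le> g"
    and act: "acts_triangularly (dihedral_group p \<times>\<times> integer_mod_group p) g M"
  shows "M = {#2 * p, 2 * p, p#} \<or> M = {#2, p, 2 * p#}"
proof -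
  let ?G = "dihedral_group p \<times>\<times> integer_mod_group p"
  have h: "snd \<circ> fst \<in> hom ?G (integer_mod_group 2)"
    by (simp add: hom_of_fst dihedral_group_snd_hom)
  have "0 < p"
    using p prime_gt_0_nat by blast
  then have w: "((0, 1), 0) \<in> carrier ?G" "(snd \<circ> fst) ((0::int, 1::int), 0::int) = 1"
    by (simp_all add: dihedral_group_def)
  have exp: "y [^]\<^bsub>?G\<^esub> p = \<one>\<^bsub>?G\<^esub>" if "y \<in> carrier ?G" "(snd \<circ> fst) y = 0" for y
    using that
    by (cases y) (auto simp: pow_DirProd dihedral_group_rotation_pow, simp add: dihedral_group_def)
  obtain x1 x2 x3 where "M = {#group.ord ?G x1, group.ord ?G x2, group.ord ?G x3#}"
    "group.ord ?G x1 \<in> {2, 2 * p}" "group.ord ?G x2 \<in> {2, 2 * p}" "group.ord ?G x3 = p"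
    "\<not> (group.ord ?G x1 = 2 \<and> group.ord ?G x2 = 2)"
    using acts_triangularly_kernel_exponentE[OF act g h w p exp] by blast
  then show ?thesis
    by (auto simp: add_mset_commute)
qed

lemma dvd_below_double_cases:
  fixes u p :: int
  assumes "0 \<le> u" "u < 2 * p" "p dvd u"
  shows "u = 0 \<or> u = p"
proof -
  obtain k where k: "u = p * k"
    using assms(3) by blast
  have "0 < p"
    using assms(1,2) by simp
  with k assms(1,2) have "0 \<le> k" "k < 2"
    by (simp_all add: zero_le_mult_iff)
  then have "k = 0 \<or> k = 1"
    by auto
  with k show ?thesis
    by auto
qed

lemma Z2p_Zp_det_hom:
  "(\<lambda>w. (fst z * snd w - snd z * fst w) mod int p)
     \<in> hom (integer_mod_group (2 * p) \<times>\<times> integer_mod_group p) (integer_mod_group p)"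
proof -
  have reduce: "c * (a mod int (2 * p)) mod int p = c * a mod int p" for a c
    by (metis dvd_triv_right mod_mod_cancel mod_mult_right_eq of_nat_mult)
  have "(fst z * ((b + d) mod int p) - snd z * ((a + c) mod int (2 * p))) mod int p
      = ((fst z * b - snd z * a) mod int p + (fst z * d - snd z * c) mod int p) mod int p"
    for a b c d
  proof -
    have "(fst z * ((b + d) mod int p) - snd z * ((a + c) mod int (2 * p))) mod int p
        = (fst z * (b + d) - snd z * (a + c)) mod int p"
      by (metis reduce mod_diff_eq mod_mult_right_eq)
    also have "\<dots> = ((fst z * b - snd z * a) + (fst z * d - snd z * c)) mod int p"
      by (simp add: algebra_simps)
    finally show ?thesis
      by (simp add: mod_add_eq)
  qed
  then show ?thesis
    by (auto simp: hom_def carrier_integer_mod_group mult_DirProd')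
qed

lemma Z2p_Zp_generating_triple_no_involution:
  assumes p: "odd p" "1 < p"
    and x: "generating_triple (integer_mod_group (2 * p) \<times>\<times> integer_mod_group p) x1 x2 x3"
    and x3: "even (fst x3)" "x3 \<noteq> (0, 0)"
    and y: "y \<in> {x1, x2}" "y \<otimes>\<^bsub>integer_mod_group (2 * p) \<times>\<times> integer_mod_group p\<^esub> y = (0, 0)"
  shows False
proof -
  let ?G = "integer_mod_group (2 * p) \<times>\<times> integer_mod_group p"
  define D where "D = (\<lambda>w. (fst x3 * snd w - snd x3 * fst w) mod int p)"
  have G: "group ?G"
    by (simp add: DirProd_group)
  have hD: "D \<in> hom ?G (integer_mod_group p)"
    unfolding D_def by (rule Z2p_Zp_det_hom)
  have "x3 \<in> carrier ?G"
    using x by (simp add: generating_triple_def)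
  \<comment> \<open>An involution of Z_2p x Z_p lies in pZ_2p x 0, so D vanishes on it.\<close>
  have "coprime (int p) 2"
    using p(1) by simp
  moreover have "int p dvd 2 * snd y" "int p dvd fst y"
    using y(2) by (auto simp: mult_DirProd' mod_eq_0_iff_dvd)
  ultimately have "int p dvd snd y"
    using coprime_dvd_mult_right_iff by blast
  then have "D y = 0"
    using \<open>int p dvd fst y\<close> by (simp add: D_def)
  have "D x3 = 0"
    by (simp add: D_def)
  have x': "generating_triple ?G x2 x3 x1" "generating_triple ?G x3 x1 x2"
    using group.generating_triple_rotate[OF G] x by blast+
  have D: "D w = 0" if "w \<in> carrier ?G" for w
    using y(1) \<open>D y = 0\<close> \<open>D x3 = 0\<close> x'
      hom_integer_mod_group_generating_triple_trivial[OF G hD _ _ _ that] by blast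
  have "int p dvd fst x3"
    using D[of "(0, 1)"] p(2) by (simp add: D_def mod_eq_0_iff_dvd)
  moreover have "int p dvd snd x3"
    using D[of "(1, 0)"] by (simp add: D_def mod_eq_0_iff_dvd)
  moreover have "0 \<le> fst x3" "fst x3 < 2 * int p" "0 \<le> snd x3" "snd x3 < int p"
    using \<open>x3 \<in> carrier ?G\<close> p(2) by (auto simp: carrier_integer_mod_group mem_Times_iff)
  ultimately have "fst x3 = 0" "snd x3 = 0"
    using dvd_below_double_cases[of "fst x3" "int p"] dvd_below_double_cases[of "snd x3" "int p"]
      x3(1) p(1) by auto
  with x3(2) show False
    by (simp add: prod_eq_iff)
qed

lemma Z2p_Zp_signature:
  assumes p: "Factorial_Ring.prime p" "3 \<le> p" and g: "2 \<le> g"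
    and act: "acts_triangularly (integer_mod_group (2 * p) \<times>\<times> integer_mod_group p) g M"
  shows "M = {#2 * p, 2 * p, p#}"
proof -
  let ?G = "integer_mod_group (2 * p) \<times>\<times> integer_mod_group p"
  let ?h = "(\<lambda>a. a mod 2) \<circ> fst"
  have h: "?h \<in> hom ?G (integer_mod_group 2)"
    using hom_integer_mod_group_mod[of 2 "2 * p"] by (simp add: hom_of_fst)
  have w: "(1, 0) \<in> carrier ?G" "?h (1::int, 0::int) = 1"
    using p(2) by (simp_all add: carrier_integer_mod_group)
  have exp: "y [^]\<^bsub>?G\<^esub> p = \<one>\<^bsub>?G\<^esub>" if "?h y = 0" for y
    using that by (auto simp: pow_DirProd elim!: evenE)
  obtain x1 x2 x3 where G: "group ?G" and x: "generating_triple ?G x1 x2 x3"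
    and x3: "?h x3 = 0" "group.ord ?G x3 = p"
    and M: "M = {#group.ord ?G x1, group.ord ?G x2, group.ord ?G x3#}"
    and ord: "group.ord ?G x1 \<in> {2, 2 * p}" "group.ord ?G x2 \<in> {2, 2 * p}"
    using acts_triangularly_kernel_exponentE[OF act g h w p(1) exp] by blast
  have xs: "x1 \<in> carrier ?G" "x2 \<in> carrier ?G" "x3 \<in> carrier ?G"
    using x by (simp_all add: generating_triple_def)
  have "odd p" "1 < p"
    using p prime_odd_nat by auto
  moreover have "even (fst x3)"
    using x3(1) by (simp add: even_iff_mod_2_eq_zero)
  moreover have "x3 \<noteq> (0, 0)"
    using group.ord_eq_1[OF G xs(3)] x3(2) p(2) by auto
  ultimately have "group.ord ?G y \<noteq> 2" if "y \<in> {x1, x2}" for y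
    using Z2p_Zp_generating_triple_no_involution[OF _ _ x _ _ that]
      group.square_eq_one_if_ord_eq_2[OF G] that xs by auto
  then show ?thesis
    using M ord x3(2) by auto
qed

lemma integer_mod_group_ord_dvd_iff:
  assumes "x \<in> carrier (integer_mod_group n)"
  shows "group.ord (integer_mod_group n) x dvd m \<longleftrightarrow> int n dvd int m * x"
  using group.pow_eq_id[OF group_integer_mod_group assms, of m] by (simp add: dvd_eq_mod_eq_0)

lemma Z2p2_ord:
  fixes p :: nat and x :: int
  assumes p: "Factorial_Ring.prime p" "odd p"
    and x: "x \<in> carrier (integer_mod_group (2 * p ^ 2))"
      "2 \<le> group.ord (integer_mod_group (2 * p ^ 2)) x"
  shows "even x \<Longrightarrow> int p dvd x \<Longrightarrow> group.ord (integer_mod_group (2 * p ^ 2)) x = p"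
    and "even x \<Longrightarrow> \<not> int p dvd x \<Longrightarrow> group.ord (integer_mod_group (2 * p ^ 2)) x = p ^ 2"
    and "odd x \<Longrightarrow> \<not> int p dvd x \<Longrightarrow> group.ord (integer_mod_group (2 * p ^ 2)) x = 2 * p ^ 2"
    and "odd x \<Longrightarrow> int p dvd x \<Longrightarrow>
      group.ord (integer_mod_group (2 * p ^ 2)) x = 2 \<or> group.ord (integer_mod_group (2 * p ^ 2)) x = 2 * p"
proof -
  define d where "d = group.ord (integer_mod_group (2 * p ^ 2)) x"
  have dvd_iff: "d dvd m \<longleftrightarrow> int (2 * p ^ 2) dvd int m * x" for m
    unfolding d_def by (rule integer_mod_group_ord_dvd_iff[OF x(1)])
  have d_dvd: "d dvd 2 * p ^ 2"
    by (simp add: dvd_iff)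
  have d_multiple: "int (2 * p ^ 2) dvd int d * x"
    using dvd_iff[of d] by simp
  have even_d: "even d" if "odd x"
  proof -
    have "even (int d * x)"
      using d_multiple by (rule dvd_trans[rotated]) simp
    with that show ?thesis
      by simp
  qed
  have sq_dvd_d: "p ^ 2 dvd d" if "\<not> int p dvd x"
  proof -
    have "coprime (int p ^ 2) x"
      using prime_imp_coprime[of "int p" x] p(1) that by simp
    moreover have "int p ^ 2 dvd int d * x"
      using d_multiple dvd_mult_right by fastforce
    ultimately show ?thesis
      using coprime_dvd_mult_left_iff by (metis of_nat_dvd_iff of_nat_power)
  qed
  have d_dvd_sq: "d dvd p ^ 2" if "even x"
    using that by (auto simp: dvd_iff power2_eq_square elim!: evenE)
  have d_dvd_double: "d dvd 2 * p" if "int p dvd x"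
    using that by (auto simp: dvd_iff power2_eq_square)
  have "2 \<le> d"
    using x(2) by (simp add: d_def)
  show "group.ord (integer_mod_group (2 * p ^ 2)) x = p" if "even x" "int p dvd x"
  proof -
    have "odd (p ^ 2)"
      using p(2) by simp
    then have "odd d"
      using d_dvd_sq[OF that(1)] by (meson dvd_trans)
    then have "d dvd p"
      using d_dvd_double[OF that(2)] by (simp add: coprime_dvd_mult_right_iff)
    then have "d = 1 \<or> d = p"
      using p(1) prime_nat_iff by blast
    with \<open>2 \<le> d\<close> show ?thesis
      by (auto simp: d_def)
  qed
  show "group.ord (integer_mod_group (2 * p ^ 2)) x = p ^ 2" if "even x" "\<not> int p dvd x"
    using d_dvd_sq sq_dvd_d that by (simp add: dvd_antisym flip: d_def)
  show "group.ord (integer_mod_group (2 * p ^ 2)) x = 2 * p ^ 2" if "odd x" "\<not> int p dvd x"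
  proof -
    have "coprime 2 (p ^ 2)"
      using p(2) by simp
    then have "2 * p ^ 2 dvd d"
      using even_d sq_dvd_d that by (simp add: divides_mult)
    with d_dvd show ?thesis
      by (simp add: dvd_antisym flip: d_def)
  qed
  show "group.ord (integer_mod_group (2 * p ^ 2)) x = 2 \<or>
      group.ord (integer_mod_group (2 * p ^ 2)) x = 2 * p" if "odd x" "int p dvd x"
    using even_dvd_double_prime[OF p(1) d_dvd_double] even_d that by (simp flip: d_def)
qed

lemma Z2p2_signature:
  assumes p: "Factorial_Ring.prime p" "3 \<le> p"
    and act: "acts_triangularly (integer_mod_group (2 * p ^ 2)) g M"
  shows "M = {#2, p ^ 2, 2 * p ^ 2#} \<or> M = {#2 * p ^ 2, 2 * p ^ 2, p#}
    \<or> M = {#2 * p ^ 2, 2 * p ^ 2, p ^ 2#} \<or> M = {#2 * p, p ^ 2, 2 * p ^ 2#}"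
proof -
  let ?G = "integer_mod_group (2 * p ^ 2)"
  have h2: "(\<lambda>x. x mod 2) \<in> hom ?G (integer_mod_group 2)"
    using hom_integer_mod_group_mod[of 2 "2 * p ^ 2"] by simp
  have hp: "(\<lambda>x. x mod int p) \<in> hom ?G (integer_mod_group p)"
    using hom_integer_mod_group_mod[of p "2 * p ^ 2"] by (simp add: power2_eq_square)
  have one: "1 \<in> carrier ?G"
    using p(2) by simp
  obtain x1 x2 x3 where G: "group ?G" and x: "generating_triple ?G x1 x2 x3"
    and M: "M = {#group.ord ?G x1, group.ord ?G x2, group.ord ?G x3#}"
    and ord: "2 \<le> group.ord ?G x1" "2 \<le> group.ord ?G x2" "2 \<le> group.ord ?G x3"
    and parity: "odd x1" "odd x2" "even x3"
    using acts_triangularly_parityE[OF act h2 one]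
    by (auto simp: odd_iff_mod_2_eq_one even_iff_mod_2_eq_zero)
  have xs: "x1 \<in> carrier ?G" "x2 \<in> carrier ?G" "x3 \<in> carrier ?G"
    using x by (simp_all add: generating_triple_def)
  have not_both: "\<not> (int p dvd a \<and> int p dvd b)" if "generating_triple ?G a b c" for a b c
    using hom_integer_mod_group_generating_triple_trivial[OF G hp that _ _ one] p(2)
    by (auto simp: dvd_eq_mod_eq_0)
  have "\<not> (int p dvd x1 \<and> int p dvd x2)" "\<not> (int p dvd x2 \<and> int p dvd x3)"
    "\<not> (int p dvd x3 \<and> int p dvd x1)"
    using not_both group.generating_triple_rotate[OF G] x by blast+
  moreover have "odd p"
    using p prime_odd_nat by auto
  note ords = Z2p2_ord[OF p(1) this]
  ultimately show ?thesis
    using ords(3,4)[OF xs(1) ord(1) parity(1)] ords(3,4)[OF xs(2) ord(2) parity(2)]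
      ords(1,2)[OF xs(3) ord(3) parity(3)]
    unfolding M
    by (cases "int p dvd x1"; cases "int p dvd x2"; cases "int p dvd x3")
      (auto simp: add_mset_commute)
qed

theorem lemma1:
  fixes p g :: nat
  assumes "Factorial_Ring.prime p" and "p \<ge> 3" and "g \<ge> 2"
  shows "(\<not> (\<exists>M. acts_triangularly (dihedral_group (p ^ 2)) g M))
       \<and> (\<not> (\<exists>M. acts_triangularly (Zp2_semidir_Z2 p) g M))
       \<and> (\<forall>M. acts_triangularly (integer_mod_group (2 * p) \<times>\<times> integer_mod_group p) g M
              \<longrightarrow> M = {#2 * p, 2 * p, p#})
       \<and> (\<forall>M. acts_triangularly (dihedral_group p \<times>\<times> integer_mod_group p) g M
              \<longrightarrow> M = {#2 * p, 2 * p, p#} \<or> M = {#2, p, 2 * p#})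
       \<and> (\<forall>M. acts_triangularly (integer_mod_group (2 * p ^ 2)) g M
              \<longrightarrow> M = {#2, p ^ 2, 2 * p ^ 2#} \<or> M = {#2 * p ^ 2, 2 * p ^ 2, p#}
                \<or> M = {#2 * p ^ 2, 2 * p ^ 2, p ^ 2#} \<or> M = {#2 * p, p ^ 2, 2 * p ^ 2#})"
proof -
  have "0 < p"
    using assms(2) by simp
  then show ?thesis
    using dihedral_group_not_acts_triangularly[of "p ^ 2" g]
      Zp2_semidir_Z2_not_acts_triangularly[of p g]
      Z2p_Zp_signature[OF assms] dihedral_times_cyclic_signature[OF assms(1,3)]
      Z2p2_signature[OF assms(1,2)] assms(3)
    by auto
qed

end
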